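(* Let $n\ge 5$ and let $\sigma$ be a maximal simplex of $\Delta_n$ that covers all places. If there exists $w\in\sigma$ with $N(w)\cap\sigma=\{v\}$, then $N(v)\subseteq\sigma$.
   Context: $\mathbb{I}_n$ is the $n$-dimensional hypercube graph on vertex set $\{0,1\}^n$ (adjacent iff differing in exactly one coordinate), with Hamming distance $d(v,w)=\#\{i: v(i)\ne w(i)\}$, $v(i)$ the $i$-th coordinate. $\Delta_n=\mathcal{VR}(\mathbb{I}_n;3)$ is the simplicial complex whose simplices are the subsets $\sigma\subseteq\{0,1\}^n$ with $d(x,y)\le 3$ for all $x,y\in\sigma$. A simplex $\sigma$ covers all places if for each $i\in[n]=\{1,\dots,n\}$ there are $v,w\in\sigma$ with $v(i)=1$ and $w(i)=0$. $N(v)=\{v^i: i\in[n]\}$, where $v^i$ is $v$ with coordinate $i$ changed. *)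

theory Defs
  imports Main
begin

text \<open>A vertex of the n-cube {0,1}^n is encoded as the set of coordinates
(in {1..n}) where it equals 1.\<close>

definition cube_vertices :: "nat \<Rightarrow> nat set set" where
  "cube_vertices n = Pow {1..n}"

definition hamming :: "nat set \<Rightarrow> nat set \<Rightarrow> nat" where
  "hamming v w = card ((v - w) \<union> (w - v))"

text \<open>Simplices of the Vietoris-Rips complex VR(I_n; 3).\<close>
definition is_simplex :: "nat \<Rightarrow> nat set set \<Rightarrow> bool" where
  "is_simplex n \<sigma> \<longleftrightarrow> \<sigma> \<noteq> {} \<and> \<sigma> \<subseteq> cube_vertices n \<and>
     (\<forall>x\<in>\<sigma>. \<forall>y\<in>\<sigma>. hamming x y \<le> 3)"

definition is_maximal_simplex :: "nat \<Rightarrow> nat set set \<Rightarrow> bool" where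
  "is_maximal_simplex n \<sigma> \<longleftrightarrow> is_simplex n \<sigma> \<and>
     (\<forall>\<tau>. is_simplex n \<tau> \<and> \<sigma> \<subseteq> \<tau> \<longrightarrow> \<tau> = \<sigma>)"

definition covers_all_places :: "nat \<Rightarrow> nat set set \<Rightarrow> bool" where
  "covers_all_places n \<sigma> \<longleftrightarrow>
     (\<forall>i\<in>{1..n}. \<exists>v\<in>\<sigma>. \<exists>w\<in>\<sigma>. i \<in> v \<and> i \<notin> w)"

definition flip :: "nat set \<Rightarrow> nat \<Rightarrow> nat set" where
  "flip v i = (if i \<in> v then v - {i} else insert i v)"

definition nbhd :: "nat \<Rightarrow> nat set \<Rightarrow> nat set set" where
  "nbhd n v = (\<lambda>i. flip v i) ` {1..n}"

end

theory Submission
  imports Defs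
begin

text \<open>Translating by w (symmetric difference) is an automorphism of the cube, so we may assume
  w = {} and v = {i}. Then every vertex of \<sigma> has weight at most 3. If some nonempty vertex x
  of \<sigma> avoided i, it would be a pair {a,b}; maximality, applied to the excluded singletons {a}
  and {b}, produces vertices {i,b,c} and {i,a,c} of \<sigma>. These three vertices confine every vertex
  of \<sigma> to the coordinates {i,a,b,c}, contradicting that \<sigma> covers all n \<ge> 5 places. Hence every
  nonempty vertex of \<sigma> contains i, so every {i,j} is within distance 3 of \<sigma> and lies in \<sigma> by
  maximality.\<close>

lemma hamming_sym: "hamming x y = hamming y x"
  unfolding hamming_def by (simp add: Un_commute)

lemma hamming_add_card_Int:
  assumes "finite A" "finite B"
  shows "hamming A B + 2 * card (A \<inter> B) = card A + card B"
proof -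
  have "(A - B) \<inter> (B - A) = {}" by auto
  then have "hamming A B = card (A - B) + card (B - A)"
    unfolding hamming_def using assms by (simp add: card_Un_disjoint)
  moreover have "card (A - B) = card A - card (A \<inter> B)"
    using assms by (simp add: card_Diff_subset_Int)
  moreover have "card (B - A) = card B - card (A \<inter> B)"
    using assms by (metis card_Diff_subset_Int finite_Int inf_commute)
  moreover have "card (A \<inter> B) \<le> card A" "card (A \<inter> B) \<le> card B"
    using assms by (simp_all add: card_mono)
  ultimately show ?thesis by linarith
qed

definition translate :: "nat set \<Rightarrow> nat set \<Rightarrow> nat set" where
  "translate w x = (x - w) \<union> (w - x)"

lemma translate_translate [simp]: "translate w (translate w x) = x"
  unfolding translate_def by auto

lemma translate_self [simp]: "translate w w = {}"
  unfolding translate_def by simp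

lemma inj_translate: "inj (translate w)"
  by (metis injI translate_translate)

lemma hamming_translate [simp]: "hamming (translate w x) (translate w y) = hamming x y"
proof -
  have "(translate w x - translate w y) \<union> (translate w y - translate w x) = (x - y) \<union> (y - x)"
    unfolding translate_def by auto
  then show ?thesis unfolding hamming_def by simp
qed

lemma translate_subset_iff: "w \<subseteq> A \<Longrightarrow> translate w x \<subseteq> A \<longleftrightarrow> x \<subseteq> A"
  unfolding translate_def by auto

lemma flip_translate: "flip (translate w x) j = translate w (flip x j)"
  unfolding translate_def flip_def by auto

lemma nbhd_translate: "nbhd n (translate w x) = translate w ` nbhd n x"
  unfolding nbhd_def by (auto simp: flip_translate image_image)

lemma is_simplex_translate_iff:
  assumes "w \<subseteq> {1..n}"
  shows "is_simplex n (translate w ` T) \<longleftrightarrow> is_simplex n T"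
  unfolding is_simplex_def cube_vertices_def using translate_subset_iff[OF assms] by auto

lemma is_maximal_simplex_translate:
  assumes w: "w \<subseteq> {1..n}" and max: "is_maximal_simplex n S"
  shows "is_maximal_simplex n (translate w ` S)"
  unfolding is_maximal_simplex_def
proof (intro conjI allI impI)
  show "is_simplex n (translate w ` S)"
    using max is_simplex_translate_iff[OF w] unfolding is_maximal_simplex_def by blast
  fix T assume T: "is_simplex n T \<and> translate w ` S \<subseteq> T"
  have "is_simplex n (translate w ` T)"
    using T is_simplex_translate_iff[OF w, of "translate w ` T"] by (simp add: image_image)
  moreover have "S \<subseteq> translate w ` T"
    using T by (force simp: image_image)
  ultimately have "translate w ` T = S"
    using max unfolding is_maximal_simplex_def by blast
  then have "translate w ` translate w ` T = translate w ` S" by simp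
  then show "T = translate w ` S" by (simp add: image_image)
qed

lemma covers_all_places_translate:
  assumes "covers_all_places n S"
  shows "covers_all_places n (translate w ` S)"
  unfolding covers_all_places_def
proof
  fix i assume "i \<in> {1..n}"
  then obtain a b where ab: "a \<in> S" "b \<in> S" "i \<in> a" "i \<notin> b"
    using assms unfolding covers_all_places_def by blast
  show "\<exists>x\<in>translate w ` S. \<exists>y\<in>translate w ` S. i \<in> x \<and> i \<notin> y"
  proof (cases "i \<in> w")
    case True
    then have "i \<in> translate w b" "i \<notin> translate w a" using ab unfolding translate_def by auto
    then show ?thesis using ab by blast
  next
    case False
    then have "i \<in> translate w a" "i \<notin> translate w b" using ab unfolding translate_def by auto
    then show ?thesis using ab by blast
  qed
qed

locale unique_neighbour_of_origin =
  fixes n :: nat and S :: "nat set set" and i :: nat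
  assumes maximal: "is_maximal_simplex n S"
    and origin: "{} \<in> S"
    and neighbour: "nbhd n {} \<inter> S = {{i}}"
begin

lemma vertex_subset: "x \<in> S \<Longrightarrow> x \<subseteq> {1..n}"
  using maximal unfolding is_maximal_simplex_def is_simplex_def cube_vertices_def by auto

lemma finite_vertex: "x \<in> S \<Longrightarrow> finite x"
  using vertex_subset finite_subset by blast

lemma hamming_le_3: "x \<in> S \<Longrightarrow> y \<in> S \<Longrightarrow> hamming x y \<le> 3"
  using maximal unfolding is_maximal_simplex_def is_simplex_def by auto

lemma card_add_le: "x \<in> S \<Longrightarrow> y \<in> S \<Longrightarrow> card x + card y \<le> 3 + 2 * card (x \<inter> y)"
  using hamming_add_card_Int[OF finite_vertex finite_vertex] hamming_le_3 by fastforce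

lemma card_add_le_of_Int_subset:
  assumes "x \<in> S" "y \<in> S" "x \<inter> y \<subseteq> C" "finite C"
  shows "card x + card y \<le> 3 + 2 * card C"
  using card_add_le[OF assms(1,2)] card_mono[OF assms(4,3)] by linarith

lemma mem_if_close:
  assumes "u \<subseteq> {1..n}" and "\<forall>x\<in>S. hamming u x \<le> 3"
  shows "u \<in> S"
proof -
  have "hamming u u = 0" unfolding hamming_def by simp
  then have "is_simplex n (insert u S)"
    using assms maximal hamming_sym
    unfolding is_maximal_simplex_def is_simplex_def cube_vertices_def by auto
  then show ?thesis using maximal unfolding is_maximal_simplex_def by blast
qed

lemma card_le_3: "x \<in> S \<Longrightarrow> card x \<le> 3"
  using card_add_le[OF origin] by simp

lemma nbhd_origin: "nbhd n {} = (\<lambda>j. {j}) ` {1..n}"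
  unfolding nbhd_def flip_def by auto

lemma singleton_mem_iff:
  assumes "j \<in> {1..n}"
  shows "{j} \<in> S \<longleftrightarrow> j = i"
proof -
  have "{j} \<in> nbhd n {}" using assms nbhd_origin by auto
  then have "{j} \<in> S \<longleftrightarrow> {j} \<in> {{i}}" using neighbour by blast
  then show ?thesis by simp
qed

lemma singleton_i_mem: "{i} \<in> S"
  using neighbour by blast

lemma i_mem: "i \<in> {1..n}"
proof -
  have "{i} \<in> nbhd n {}" using neighbour by blast
  then show ?thesis using nbhd_origin by auto
qed

lemma card_one_vertex:
  assumes "x \<in> S" "card x = 1"
  shows "x = {i}"
proof -
  obtain j where "x = {j}" using assms(2) by (rule card_1_singletonE)
  then show ?thesis using assms(1) singleton_mem_iff vertex_subset[OF assms(1)] by auto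
qed

lemma pair_completion:
  assumes ab: "{a, b} \<in> S" "a \<noteq> b" "a \<noteq> i" "b \<noteq> i"
  obtains c where "{i, b, c} \<in> S" "c \<notin> {i, a, b}"
proof -
  have "{a} \<notin> S" using singleton_mem_iff vertex_subset[OF ab(1)] ab(3) by auto
  then obtain y where y: "y \<in> S" "\<not> hamming {a} y \<le> 3"
    using mem_if_close[of "{a}"] vertex_subset[OF ab(1)] by auto
  have "hamming {a} y + 2 * card ({a} \<inter> y) = 1 + card y"
    using hamming_add_card_Int finite_vertex[OF y(1)] by simp
  then have "card ({a} \<inter> y) = 0" and "card y = 3"
    using y(2) card_le_3[OF y(1)] by linarith+
  then have "a \<notin> y" by simp
  have "i \<in> y"
  proof (rule ccontr)
    assume "i \<notin> y"
    then show False
      using card_add_le_of_Int_subset[OF singleton_i_mem y(1), of "{}"] \<open>card y = 3\<close> by auto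
  qed
  moreover have "b \<in> y"
  proof (rule ccontr)
    assume "b \<notin> y"
    then show False
      using card_add_le_of_Int_subset[OF ab(1) y(1), of "{}"] \<open>card y = 3\<close> \<open>a \<notin> y\<close> ab(2) by auto
  qed
  ultimately have "card (y - {i, b}) = 1"
    using \<open>card y = 3\<close> ab(4) finite_vertex[OF y(1)] by (simp add: card_Diff_subset)
  then obtain c where c: "y - {i, b} = {c}" by (auto simp: card_Suc_eq)
  then have "y = {i, b, c}" using \<open>i \<in> y\<close> \<open>b \<in> y\<close> by auto
  moreover have "c \<notin> {i, a, b}" using c \<open>a \<notin> y\<close> by auto
  ultimately show ?thesis using that y(1) by blast
qed

text \<open>The distance bound forces card (t \<inter> W) \<ge> card t / 2 \<ge> card t - 1.\<close>

lemma diff_subset_of_weight_3: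
  assumes t: "t \<in> S" "e \<in> t" and W: "W \<in> S" "card W = 3" "e \<notin> W"
  shows "t - {e} \<subseteq> W"
proof -
  have ft: "finite t" using finite_vertex[OF t(1)] .
  have sub: "t \<inter> W \<subseteq> t - {e}" using W(3) by auto
  have "card (t - {e}) = card t - 1" using ft t(2) by simp
  also have "\<dots> \<le> card (t \<inter> W)"
    using card_add_le[OF t(1) W(1)] card_le_3[OF t(1)] W(2) by presburger
  finally have "t \<inter> W = t - {e}" using card_seteq[OF _ sub] ft by blast
  then show ?thesis by blast
qed

lemma vertices_within_triangle:
  assumes x: "{a, b} \<in> S" and Y: "{i, b, c} \<in> S" and Z: "{i, a, c} \<in> S"
    and distinct: "distinct [i, a, b, c]" and t: "t \<in> S"
  shows "t \<subseteq> {i, a, b, c}"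
proof (rule ccontr)
  assume "\<not> t \<subseteq> {i, a, b, c}"
  then obtain e where e: "e \<in> t" "e \<notin> {i, a, b, c}" by blast
  have "t - {e} \<subseteq> {i, b, c} \<inter> {i, a, c}"
    using diff_subset_of_weight_3[OF t e(1) Y] diff_subset_of_weight_3[OF t e(1) Z] e distinct
    by auto
  then have "t \<inter> {a, b} \<subseteq> {}" using e distinct by auto
  then have "card t + card {a, b} \<le> 3 + 2 * card ({} :: nat set)"
    by (rule card_add_le_of_Int_subset[OF t x]) simp
  then have "card t \<le> 1" using distinct by simp
  moreover have "card t \<noteq> 0" using e(1) finite_vertex[OF t] by auto
  ultimately have "card t = 1" by linarith
  then show False using card_one_vertex[OF t] e by auto
qed

lemma i_mem_vertex:
  assumes n: "n \<ge> 5" and cover: "covers_all_places n S"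
    and x: "x \<in> S" "x \<noteq> {}"
  shows "i \<in> x"
proof (rule ccontr)
  assume ix: "i \<notin> x"
  have "card x \<le> 2"
    using card_add_le_of_Int_subset[OF singleton_i_mem x(1), of "{}"] ix by auto
  moreover have "card x \<noteq> 1" using card_one_vertex[OF x(1)] ix by auto
  moreover have "card x \<noteq> 0" using finite_vertex[OF x(1)] x(2) by simp
  ultimately have "card x = 2" by linarith
  then obtain a b where ab: "x = {a, b}" "a \<noteq> b" by (meson card_2_iff)
  have ia: "a \<noteq> i" "b \<noteq> i" using ix ab by auto
  obtain c where Y: "{i, b, c} \<in> S" "c \<notin> {i, a, b}"
    using pair_completion ab x(1) ia by blast
  obtain d where Z: "{i, a, d} \<in> S" "d \<notin> {i, b, a}"
    using pair_completion[of b a] ab x(1) ia by (auto simp: insert_commute)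
  have "c = d"
  proof (rule ccontr)
    assume "c \<noteq> d"
    then have "{i, b, c} \<inter> {i, a, d} \<subseteq> {i}" using Y Z ab by auto
    from card_add_le_of_Int_subset[OF Y(1) Z(1) this] have "card {i, b, c} + card {i, a, d} \<le> 5"
      by simp
    moreover have "card {i, b, c} = 3" "card {i, a, d} = 3" using Y Z ab ia by auto
    ultimately show False by simp
  qed
  have distinct: "distinct [i, a, b, c]" using Y(2) ab ia by auto
  have "\<not> {1..n} \<subseteq> {i, a, b, c}"
  proof
    assume "{1..n} \<subseteq> {i, a, b, c}"
    then have "card {1..n} \<le> card {i, a, b, c}" by (intro card_mono) auto
    then show False using n distinct by simp
  qed
  then obtain e where e: "e \<in> {1..n}" "e \<notin> {i, a, b, c}" by blast
  obtain t where t: "t \<in> S" "e \<in> t" using cover e(1) unfolding covers_all_places_def by blast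
  have "t \<subseteq> {i, a, b, c}"
    using vertices_within_triangle[OF x(1)[unfolded ab] Y(1) Z(1)[folded \<open>c = d\<close>] distinct t(1)] .
  then show False using t e by blast
qed

lemma nbhd_subset:
  assumes "n \<ge> 5" and "covers_all_places n S"
  shows "nbhd n {i} \<subseteq> S"
proof
  fix u assume "u \<in> nbhd n {i}"
  then obtain j where j: "j \<in> {1..n}" "u = flip {i} j" unfolding nbhd_def by auto
  show "u \<in> S"
  proof (cases "j = i")
    case True
    then show ?thesis using j origin by (simp add: flip_def)
  next
    case False
    then have u: "u = {i, j}" "card u = 2" using j by (auto simp: flip_def)
    have "hamming u x \<le> 3" if "x \<in> S" for x
    proof (cases "x = {}")
      case True
      then show ?thesis using u by (simp add: hamming_def)
    next
      case False
      then have "{i} \<subseteq> u \<inter> x" using i_mem_vertex[OF assms that] u by auto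
      then have "1 \<le> card (u \<inter> x)"
        using card_mono[of "u \<inter> x" "{i}"] u finite_vertex[OF that] by simp
      then show ?thesis
        using hamming_add_card_Int[of u x] u finite_vertex[OF that] card_le_3[OF that] by simp
    qed
    moreover have "u \<subseteq> {1..n}" using u j i_mem by auto
    ultimately show ?thesis using mem_if_close by blast
  qed
qed

end

theorem mainTheorem7:
  fixes n :: nat and \<sigma> :: "nat set set" and v w :: "nat set"
  assumes "n \<ge> 5"
    and "is_maximal_simplex n \<sigma>"
    and "covers_all_places n \<sigma>"
    and "w \<in> \<sigma>"
    and "nbhd n w \<inter> \<sigma> = {v}"
  shows "nbhd n v \<subseteq> \<sigma>"
proof -
  let ?S = "translate w ` \<sigma>"
  have w: "w \<subseteq> {1..n}"
    using assms(2,4) unfolding is_maximal_simplex_def is_simplex_def cube_vertices_def by blast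
  have "nbhd n {} \<inter> ?S = translate w ` nbhd n w \<inter> translate w ` \<sigma>"
    using nbhd_translate[of n w w] by simp
  also have "\<dots> = translate w ` (nbhd n w \<inter> \<sigma>)"
    by (rule image_Int[OF inj_translate, symmetric])
  finally have neighbour: "nbhd n {} \<inter> ?S = {translate w v}"
    using assms(5) by simp
  then have "translate w v \<in> nbhd n {}" by blast
  then obtain i where i: "translate w v = {i}"
    unfolding nbhd_def flip_def by auto
  have origin: "{} \<in> ?S"
    using assms(4) translate_self by (metis imageI)
  interpret unique_neighbour_of_origin n ?S i
    by (rule unique_neighbour_of_origin.intro[OF is_maximal_simplex_translate[OF w assms(2)] origin])
      (use neighbour i in simp)
  have "nbhd n (translate w v) \<subseteq> ?S"
    using nbhd_subset[OF assms(1) covers_all_places_translate[OF assms(3)]] i by simp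
  then have "translate w ` nbhd n v \<subseteq> translate w ` \<sigma>"
    by (simp add: nbhd_translate)
  then show ?thesis by (simp add: inj_image_subset_iff[OF inj_translate])
qed
end
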